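(* Consider the family of load balancing systems described in the context, indexed by $\epsilon\in(0,\mu_\Sigma)$, operated under a throughput-optimal load balancing policy. Suppose there exist $\epsilon_0>0$, a function $g:(0,\epsilon_0)\to[0,\infty)$ and a constant $C<\infty$ such that for all $\epsilon\in(0,\epsilon_0)$, $$\mathbb E\Big[\big\|\overline{\mathbf Q}^{(\epsilon)}(t+1)\big\|_1\,\big\|\overline{\mathbf U}^{(\epsilon)}(t)\big\|_1\Big]\le C g(\epsilon).$$ Let $Z^{(\epsilon)}$ be exponential with mean $\frac{(\sigma_\Sigma^{(\epsilon)})^2+\nu_\Sigma^2}{2}$. Then there exists a constant $C'<\infty$, independent of $\epsilon$, such that for all $\epsilon\in(0,\epsilon_0)$, $$d_W\Big(\epsilon\sum_{n=1}^N \overline Q_n^{(\epsilon)},\,Z^{(\epsilon)}\Big)\le C'\max\big(g(\epsilon),\epsilon\big).$$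
   Context: Wasserstein distance: for real-valued random variables $X,Y$, $d_W(X,Y)=\sup_{h\in \mathrm{Lip}(1)}|\mathbb E[h(X)]-\mathbb E[h(Y)]|$, where $\mathrm{Lip}(1)$ is the set of functions $h:\mathbb R\to\mathbb R$ with $|h(x)-h(y)|\le|x-y|$. Load balancing system: time is slotted; there are $N\ge1$ servers, each with an infinite FIFO queue. In slot $t$, $A_\Sigma(t)$ exogenous tasks arrive; a dispatcher, observing the queue lengths (possibly with randomization), routes them so that queue $n$ receives $A_n(t)\ge0$ tasks with $\sum_n A_n(t)=A_\Sigma(t)$. Server $n$ offers service $S_n(t)$. Queue dynamics: $Q_n(t+1)=Q_n(t)+A_n(t)-S_n(t)+U_n(t)$ with $U_n(t)=\max(S_n(t)-A_n(t)-Q_n(t),0)$. $\{A_\Sigma(t)\}$ is i.i.d. over time, nonnegative integer-valued, with $\mathbb P(A_\Sigma(t)=0)>0$; each $\{S_n(t)\}$ is i.i.d. over time, nonnegative integer-valued with mean $\mu_n$; services are independent across servers and of the arrivals. $S_\Sigma(t)=\sum_n S_n(t)$ has mean $\mu_\Sigma=\sum_n\mu_n$ and variance $\nu_\Sigma^2$. For each $\epsilon$, $A_\Sigma$ has mean $\lambda_\Sigma^{(\epsilon)}=\mu_\Sigma-\epsilon$ and variance $(\sigma_\Sigma^{(\epsilon)})^2$. There are constants $A_{max},S_{max}$ independent of $\epsilon$ with $A_\Sigma(t)\le A_{max}$, $S_n(t)\le S_{max}$, and a constant $c_0>0$ with $(\sigma_\Sigma^{(\epsilon)})^2+\nu_\Sigma^2\ge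 c_0$ for all $\epsilon$. A policy is throughput optimal if for every $\epsilon$ the queue-length Markov chain is positive recurrent and all moments of $\|\overline{\mathbf Q}^{(\epsilon)}\|$ are finite. Steady-state notation: $\overline{\mathbf Q}^{(\epsilon)}=\overline{\mathbf Q}^{(\epsilon)}(t)$ is distributed according to the stationary distribution; $\overline{\mathbf A}(t),\overline{\mathbf S}(t),\overline{\mathbf U}^{(\epsilon)}(t)$ and $\overline{\mathbf Q}^{(\epsilon)}(t+1)$ denote the arrival, service, unused service and next queue-length vectors generated in one slot starting from $\overline{\mathbf Q}^{(\epsilon)}(t)$. $\|\cdot\|_1$ is the $\ell_1$ norm. *)

theory Defs
  imports "HOL-Analysis.Analysis" "HOL-Probability.Probability"
begin

text \<open>Queue-length vectors are functions nat => nat; only indices n < N are used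
  (components n >= N are kept at 0 by the dynamics).\<close>

type_synonym qvec = "nat \<Rightarrow> nat"

definition wasserstein :: "real measure \<Rightarrow> real measure \<Rightarrow> ereal" where
  "wasserstein M M' =
     (SUP h \<in> {h :: real \<Rightarrow> real. lipschitz_on 1 UNIV h}.
        ereal \<bar>(\<integral>x. h x \<partial>M) - (\<integral>x. h x \<partial>M')\<bar>)"

text \<open>One slot starting from queue vector q: total arrivals a ~ arr, routing vector
  x ~ policy q a, independent services s ~ product of serv n (n < N).\<close>
definition lb_slot ::
  "nat \<Rightarrow> nat pmf \<Rightarrow> (qvec \<Rightarrow> nat \<Rightarrow> qvec pmf) \<Rightarrow> (nat \<Rightarrow> nat pmf) \<Rightarrow> qvec
    \<Rightarrow> (qvec \<times> qvec) pmf" where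
  "lb_slot N arr policy serv q =
     bind_pmf arr (\<lambda>a. bind_pmf (policy q a) (\<lambda>x.
       bind_pmf (Pi_pmf {..<N} 0 serv) (\<lambda>s. return_pmf (x, s))))"

text \<open>Q_n(t+1) = Q_n + A_n - S_n + U_n = max(Q_n + A_n - S_n, 0) (truncated nat subtraction).\<close>
definition next_queue :: "nat \<Rightarrow> qvec \<Rightarrow> qvec \<Rightarrow> qvec \<Rightarrow> qvec" where
  "next_queue N q x s = (\<lambda>n. if n < N then q n + x n - s n else 0)"

definition unused :: "nat \<Rightarrow> qvec \<Rightarrow> qvec \<Rightarrow> qvec \<Rightarrow> qvec" where
  "unused N q x s = (\<lambda>n. if n < N then s n - (x n + q n) else 0)"

definition lb_kernel ::
  "nat \<Rightarrow> nat pmf \<Rightarrow> (qvec \<Rightarrow> nat \<Rightarrow> qvec pmf) \<Rightarrow> (nat \<Rightarrow> nat pmf) \<Rightarrow> qvec \<Rightarrow> qvec pmf" where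
  "lb_kernel N arr policy serv q =
     map_pmf (\<lambda>(x, s). next_queue N q x s) (lb_slot N arr policy serv q)"

definition stationary ::
  "nat \<Rightarrow> nat pmf \<Rightarrow> (qvec \<Rightarrow> nat \<Rightarrow> qvec pmf) \<Rightarrow> (nat \<Rightarrow> nat pmf) \<Rightarrow> qvec pmf \<Rightarrow> bool" where
  "stationary N arr policy serv p \<longleftrightarrow> bind_pmf p (lb_kernel N arr policy serv) = p"

definition steady_joint ::
  "nat \<Rightarrow> nat pmf \<Rightarrow> (qvec \<Rightarrow> nat \<Rightarrow> qvec pmf) \<Rightarrow> (nat \<Rightarrow> nat pmf) \<Rightarrow> qvec pmf
    \<Rightarrow> (qvec \<times> qvec \<times> qvec) pmf" where
  "steady_joint N arr policy serv p =
     bind_pmf p (\<lambda>q. map_pmf (\<lambda>(x, s). (q, x, s)) (lb_slot N arr policy serv q))"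

definition l1 :: "nat \<Rightarrow> qvec \<Rightarrow> real" where
  "l1 N v = real (\<Sum>n<N. v n)"

end

theory Submission
  imports Defs
begin

text \<open>Stein's method for the exponential law with rate \<open>\<lambda>\<close>. For a 1-Lipschitz \<open>h\<close>, the solution
  \<open>g\<close> of \<open>g'/\<lambda> - g = h - E h(T)\<close>, \<open>g(0) = 0\<close>, satisfies \<open>|g(x)| \<le> x\<close>, \<open>|g'| \<le> 1\<close>, and \<open>g'\<close> is
  \<open>2\<lambda>\<close>-Lipschitz; let \<open>F\<close> be its primitive. Write \<open>W = \<Sigma>\<^sub>n Q\<^sub>n(t)\<close>, \<open>W' = \<Sigma>\<^sub>n Q\<^sub>n(t+1)\<close>
  and \<open>W' - W = D + U\<close>, where the net input \<open>D = A\<^sub>\<Sigma> - S\<^sub>\<Sigma>\<close> is independent of \<open>Q(t)\<close> with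
  \<open>E D = -\<epsilon>\<close> and \<open>E D\<^sup>2 = 2/\<lambda> + \<epsilon>\<^sup>2\<close> for \<open>\<lambda> = 2/(\<sigma>\<^sup>2 + \<nu>\<^sup>2)\<close>. In steady state
  \<open>E F(\<epsilon>W') = E F(\<epsilon>W)\<close>; expanding \<open>F(\<epsilon>W')\<close> to second order around \<open>\<epsilon>W\<close> in \<open>D\<close> gives
  \<open>\<epsilon>\<^sup>2 E[g'(\<epsilon>W)/\<lambda> - g(\<epsilon>W)] = O(\<epsilon>\<^sup>2 E[W' U] + \<epsilon>\<^sup>3)\<close>, using \<open>E U = \<epsilon>\<close> for the terms that
  are linear in \<open>U\<close>. By the Stein equation the left side is \<open>\<epsilon>\<^sup>2 (E h(\<epsilon>W) - E h(T))\<close>.\<close>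

section \<open>Stein's equation for the exponential distribution\<close>

lemma abs_diff_le_of_deriv_bound:
  fixes f f' :: "real \<Rightarrow> real"
  assumes "a \<le> b" and cont: "continuous_on {a..b} f"
    and der: "\<And>t. a < t \<Longrightarrow> t < b \<Longrightarrow> (f has_real_derivative f' t) (at t)"
    and bound: "\<And>t. a < t \<Longrightarrow> t < b \<Longrightarrow> \<bar>f' t\<bar> \<le> B"
  shows "\<bar>f b - f a\<bar> \<le> B * (b - a)"
proof (cases "a = b")
  case False
  with \<open>a \<le> b\<close> have "a < b" by simp
  then obtain l z where z: "a < z" "z < b" "DERIV f z :> l" "f b - f a = (b - a) * l"
    using MVT[OF _ cont] der real_differentiable_def by blast
  have "l = f' z" using DERIV_unique[OF z(3) der[OF z(1,2)]] .
  with bound z have "\<bar>l\<bar> \<le> B" by simp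
  with z(4) \<open>a < b\<close> show ?thesis by (simp add: abs_mult mult.commute mult_right_mono)
qed simp

lemma abs_diff_le_of_deriv_bound_between:
  fixes f f' :: "real \<Rightarrow> real"
  assumes cont: "\<And>b. continuous_on {lo..b} f"
    and der: "\<And>t. lo < t \<Longrightarrow> (f has_real_derivative f' t) (at t)"
    and "lo \<le> x" "lo \<le> y"
    and bound: "\<And>t. min x y < t \<Longrightarrow> t < max x y \<Longrightarrow> \<bar>f' t\<bar> \<le> B"
  shows "\<bar>f y - f x\<bar> \<le> B * \<bar>y - x\<bar>"
proof -
  have "continuous_on {min x y..max x y} f"
    by (rule continuous_on_subset[OF cont[of "max x y"]]) (use assms in auto)
  then have "\<bar>f (max x y) - f (min x y)\<bar> \<le> B * (max x y - min x y)"
    by (rule abs_diff_le_of_deriv_bound[rotated]) (use assms in auto)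
  then show ?thesis by (cases "x \<le> y") (auto simp: abs_minus_commute max_def min_def)
qed

lemma lipschitz_on_1_abs_diff_le:
  fixes h :: "real \<Rightarrow> real"
  shows "lipschitz_on 1 UNIV h \<Longrightarrow> \<bar>h x - h y\<bar> \<le> \<bar>x - y\<bar>"
  using lipschitz_onD[of 1 UNIV h x y] by (simp add: dist_real_def)

lemma lipschitz_on_borel_measurable:
  fixes h :: "real \<Rightarrow> real"
  shows "lipschitz_on L UNIV h \<Longrightarrow> h \<in> borel_measurable borel"
  using lipschitz_on_continuous_on borel_measurable_continuous_onI by blast

definition exp_measure :: "real \<Rightarrow> real measure" where
  "exp_measure l = density lborel (exponential_density l)"

lemma prob_space_exp_measure: "0 < l \<Longrightarrow> prob_space (exp_measure l)"
  unfolding exp_measure_def by (rule prob_space_exponential_density)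

lemma sets_exp_measure [simp, measurable_cong]: "sets (exp_measure l) = sets borel"
  by (simp add: exp_measure_def)

lemma exp_measure_distributed:
  "0 < l \<Longrightarrow> distributed (exp_measure l) lborel (\<lambda>x. x) (exponential_density l)"
  unfolding distributed_def exp_measure_def
  by (auto simp: exponential_density_def distr_id2 intro!: AE_I2)

lemma AE_exp_measure_nonneg: "AE t in exp_measure l. 0 \<le> t"
  unfolding exp_measure_def
  by (subst AE_density) (auto simp: exponential_density_def)

lemma integrable_exp_measure_id: "0 < l \<Longrightarrow> integrable (exp_measure l) (\<lambda>t. t)"
  using prob_space.erlang_ith_moment_integrable[OF prob_space_exp_measure _ exp_measure_distributed, of l 1]
  by simp

lemma integral_exp_measure_abs: "0 < l \<Longrightarrow> (\<integral>t. \<bar>t\<bar> \<partial>exp_measure l) = 1 / l"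
proof -
  assume "0 < l"
  have "(\<integral>t. \<bar>t\<bar> \<partial>exp_measure l) = (\<integral>t. t \<partial>exp_measure l)"
    by (rule integral_cong_AE) (auto intro: eventually_mono[OF AE_exp_measure_nonneg])
  also have "\<dots> = 1 / l"
    using prob_space.exponential_distributed_expectation[OF prob_space_exp_measure
        \<open>0 < l\<close> exp_measure_distributed] \<open>0 < l\<close> by simp
  finally show ?thesis .
qed

definition exp_smooth :: "real \<Rightarrow> (real \<Rightarrow> real) \<Rightarrow> real \<Rightarrow> real" where
  "exp_smooth l h x = (\<integral>t. h (x + t) \<partial>exp_measure l)"

definition exp_kernel :: "real \<Rightarrow> (real \<Rightarrow> real) \<Rightarrow> real \<Rightarrow> real" where
  "exp_kernel l h y = l * exp (- y * l) * h y"

text \<open>\<open>stein_exp l h\<close> solves the Stein equation \<open>g' / l - g = h - E h(T)\<close>, \<open>g 0 = 0\<close>,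
  for \<open>T\<close> exponential with rate \<open>l\<close>; \<open>stein_exp' l h\<close> is its derivative on \<open>x > 0\<close>.\<close>
definition stein_exp :: "real \<Rightarrow> (real \<Rightarrow> real) \<Rightarrow> real \<Rightarrow> real" where
  "stein_exp l h x = exp_smooth l h 0 - exp_smooth l h x"

definition stein_exp' :: "real \<Rightarrow> (real \<Rightarrow> real) \<Rightarrow> real \<Rightarrow> real" where
  "stein_exp' l h x = l * (h x - exp_smooth l h x)"

definition stein_exp_primitive :: "real \<Rightarrow> (real \<Rightarrow> real) \<Rightarrow> real \<Rightarrow> real" where
  "stein_exp_primitive l h x = integral {0..x} (stein_exp l h)"

context
  fixes l :: real and h :: "real \<Rightarrow> real"
  assumes l: "0 < l" and h: "lipschitz_on 1 UNIV h"
begin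

interpretation exp: prob_space "exp_measure l"
  by (rule prob_space_exp_measure[OF l])

lemma integrable_exp_measure_shift: "integrable (exp_measure l) (\<lambda>t. h (x + t))"
proof (rule Bochner_Integration.integrable_bound)
  show "integrable (exp_measure l) (\<lambda>t. \<bar>h 0\<bar> + \<bar>x\<bar> + \<bar>t\<bar>)"
    using integrable_exp_measure_id[OF l] by simp
  show "(\<lambda>t. h (x + t)) \<in> borel_measurable (exp_measure l)"
    using lipschitz_on_borel_measurable[OF h] by measurable
  have "\<bar>h (x + t)\<bar> \<le> \<bar>h 0\<bar> + \<bar>x\<bar> + \<bar>t\<bar>" for t
    using lipschitz_on_1_abs_diff_le[OF h, of "x + t" 0] by simp
  then show "AE t in exp_measure l. norm (h (x + t)) \<le> norm (\<bar>h 0\<bar> + \<bar>x\<bar> + \<bar>t\<bar>)"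
    by (intro AE_I2) simp
qed

lemma exp_smooth_abs_diff_le: "\<bar>exp_smooth l h x - exp_smooth l h y\<bar> \<le> \<bar>x - y\<bar>"
proof -
  have "\<bar>exp_smooth l h x - exp_smooth l h y\<bar> = \<bar>\<integral>t. h (x + t) - h (y + t) \<partial>exp_measure l\<bar>"
    unfolding exp_smooth_def using integrable_exp_measure_shift by simp
  also have "\<dots> \<le> (\<integral>t. \<bar>x - y\<bar> \<partial>exp_measure l)"
    using integrable_exp_measure_shift lipschitz_on_1_abs_diff_le[OF h, of "x + t" "y + t" for t]
    by (intro integral_abs_bound_integral) auto
  finally show ?thesis by (simp add: exp.prob_space)
qed

lemma abs_diff_exp_smooth_le: "\<bar>h x - exp_smooth l h x\<bar> \<le> 1 / l"
proof -
  have "\<bar>h x - exp_smooth l h x\<bar> = \<bar>\<integral>t. h x - h (x + t) \<partial>exp_measure l\<bar>"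
    unfolding exp_smooth_def using integrable_exp_measure_shift by (simp add: exp.prob_space)
  also have "\<dots> \<le> (\<integral>t. \<bar>t\<bar> \<partial>exp_measure l)"
    using integrable_exp_measure_shift integrable_exp_measure_id[OF l]
      lipschitz_on_1_abs_diff_le[OF h, of x "x + t" for t]
    by (intro integral_abs_bound_integral) auto
  finally show ?thesis using integral_exp_measure_abs[OF l] by simp
qed

lemma integrable_exp_kernel: "integrable lborel (\<lambda>y. indicator {0..} y * exp_kernel l h y)"
proof -
  note [measurable] = lipschitz_on_borel_measurable[OF h]
  have "integrable (exp_measure l) h"
    using integrable_exp_measure_shift[of 0] by simp
  then have "integrable lborel (\<lambda>y. exponential_density l y *\<^sub>R h y)"
    unfolding exp_measure_def
    by (subst (asm) integrable_density) (use l in \<open>auto simp: exponential_density_def\<close>)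
  also have "(\<lambda>y. exponential_density l y *\<^sub>R h y) = (\<lambda>y. indicator {0..} y * exp_kernel l h y)"
    by (auto simp: exponential_density_def exp_kernel_def indicator_def fun_eq_iff)
  finally show ?thesis .
qed

text \<open>Memorylessness: \<open>x + T\<close> has the law of \<open>T\<close> conditioned on \<open>T \<ge> x\<close>.\<close>
lemma exp_smooth_eq:
  assumes x: "0 \<le> x"
  shows "exp_smooth l h x =
    exp (l * x) * (exp_smooth l h 0 - integral {0..x} (exp_kernel l h))"
proof -
  note [measurable] = lipschitz_on_borel_measurable[OF h]
  let ?e = "exponential_density l"
  let ?k = "\<lambda>A y. indicator A y * exp_kernel l h y"
  have [measurable]: "exp_kernel l h \<in> borel_measurable borel"
    unfolding exp_kernel_def by measurable
  have "exp_smooth l h x = (\<integral>t. ?e t * h (x + t) \<partial>lborel)"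
    unfolding exp_smooth_def exp_measure_def
    by (subst integral_density) (use l in \<open>auto simp: exponential_density_def\<close>)
  also have "\<dots> = (\<integral>y. ?e (y - x) * h y \<partial>lborel)"
    by (subst lborel_integral_real_affine[where c=1 and t=x]) (auto simp: algebra_simps)
  also have "\<dots> = (\<integral>y. exp (l * x) * ?k {x..} y \<partial>lborel)"
    by (intro Bochner_Integration.integral_cong refl)
       (auto simp: exponential_density_def exp_kernel_def indicator_def mult_exp_exp algebra_simps)
  finally have smooth_x: "exp_smooth l h x = exp (l * x) * (\<integral>y. ?k {x..} y \<partial>lborel)"
    by simp
  have "exp_smooth l h 0 = (\<integral>t. ?e t * h t \<partial>lborel)"
    unfolding exp_smooth_def exp_measure_def
    by (subst integral_density) (use l in \<open>auto simp: exponential_density_def\<close>)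
  also have "\<dots> = (\<integral>y. ?k {0..x} y + ?k {x..} y \<partial>lborel)"
    by (rule integral_cong_AE)
       (use x in \<open>auto simp: exponential_density_def exp_kernel_def indicator_def
                   intro!: eventually_mono[OF AE_lborel_singleton[of x]]\<close>)
  also have "\<dots> = (\<integral>y. ?k {0..x} y \<partial>lborel) + (\<integral>y. ?k {x..} y \<partial>lborel)"
    using x by (intro Bochner_Integration.integral_add
        Bochner_Integration.integrable_bound[OF integrable_exp_kernel]) (auto simp: indicator_def)
  also have "(\<integral>y. ?k {0..x} y \<partial>lborel) = integral {0..x} (exp_kernel l h)"
    using set_borel_integral_eq_integral(2)[of "{0..x}" "exp_kernel l h"]
      Bochner_Integration.integrable_bound[OF integrable_exp_kernel, of "?k {0..x}"]
    by (auto simp: set_integrable_def set_lebesgue_integral_def indicator_def)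
  finally show ?thesis using smooth_x by simp
qed

lemma exp_smooth_has_real_derivative:
  assumes x: "0 < x"
  shows "(exp_smooth l h has_real_derivative l * exp_smooth l h x - l * h x) (at x)"
proof -
  let ?I = "\<lambda>y. integral {0..y} (exp_kernel l h)"
  have "continuous_on {0..x + 1} (exp_kernel l h)"
    using lipschitz_on_continuous_on[OF h] unfolding exp_kernel_def
    by (auto intro!: continuous_intros intro: continuous_on_subset)
  then have "(?I has_real_derivative exp_kernel l h x) (at x within {0..x + 1})"
    using x by (intro integral_has_real_derivative) auto
  moreover have "at x within {0..x + 1} = at x"
    using x by (intro at_within_interior) simp
  ultimately have "((\<lambda>y. exp (l * y) * (exp_smooth l h 0 - ?I y)) has_real_derivative
      l * exp (l * x) * (exp_smooth l h 0 - ?I x) - exp_kernel l h x * exp (l * x)) (at x)"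
    by (auto intro!: derivative_eq_intros)
  also have "l * exp (l * x) * (exp_smooth l h 0 - ?I x) - exp_kernel l h x * exp (l * x)
      = l * exp_smooth l h x - l * h x"
  proof -
    have "exp_kernel l h x * exp (l * x) = l * h x"
      by (simp add: exp_kernel_def mult_exp_exp)
    moreover have "exp (l * x) * (exp_smooth l h 0 - ?I x) = exp_smooth l h x"
      using exp_smooth_eq[of x] x by simp
    ultimately show ?thesis by (metis mult.assoc right_diff_distrib)
  qed
  finally show ?thesis
  proof (rule has_field_derivative_transform_within_open[of _ _ _ "{0<..}"])
    show "exp (l * y) * (exp_smooth l h 0 - ?I y) = exp_smooth l h y" if "y \<in> {0<..}" for y
      using exp_smooth_eq[of y] that by simp
  qed (use x in auto)
qed

lemma stein_exp_0 [simp]: "stein_exp l h 0 = 0"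
  by (simp add: stein_exp_def)

lemma stein_exp_abs_diff_le: "\<bar>stein_exp l h x - stein_exp l h y\<bar> \<le> \<bar>x - y\<bar>"
  using exp_smooth_abs_diff_le[of y x] by (simp add: stein_exp_def abs_minus_commute)

lemma stein_exp_abs_le: "0 \<le> x \<Longrightarrow> \<bar>stein_exp l h x\<bar> \<le> x"
  using stein_exp_abs_diff_le[of x 0] by simp

lemma continuous_on_stein_exp: "continuous_on S (stein_exp l h)"
proof -
  have "lipschitz_on 1 UNIV (stein_exp l h)"
    by (rule lipschitz_onI) (use stein_exp_abs_diff_le in \<open>auto simp: dist_real_def\<close>)
  then show ?thesis using lipschitz_on_continuous_on continuous_on_subset by blast
qed

lemma stein_exp_has_real_derivative:
  "0 < x \<Longrightarrow> (stein_exp l h has_real_derivative stein_exp' l h x) (at x)"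
  unfolding stein_exp_def[abs_def] stein_exp'_def
  by (auto intro!: derivative_eq_intros exp_smooth_has_real_derivative simp: algebra_simps)

lemma stein_exp'_abs_le: "\<bar>stein_exp' l h x\<bar> \<le> 1"
proof -
  have "\<bar>stein_exp' l h x\<bar> = l * \<bar>h x - exp_smooth l h x\<bar>"
    using l by (simp add: stein_exp'_def abs_mult)
  also have "\<dots> \<le> l * (1 / l)"
    using abs_diff_exp_smooth_le[of x] l by (intro mult_left_mono) auto
  finally show ?thesis using l by simp
qed

lemma stein_exp'_abs_diff_le: "\<bar>stein_exp' l h x - stein_exp' l h y\<bar> \<le> 2 * l * \<bar>x - y\<bar>"
proof -
  have "stein_exp' l h x - stein_exp' l h y
      = l * ((h x - h y) - (exp_smooth l h x - exp_smooth l h y))"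
    by (simp add: stein_exp'_def algebra_simps)
  then have "\<bar>stein_exp' l h x - stein_exp' l h y\<bar>
      = l * \<bar>(h x - h y) - (exp_smooth l h x - exp_smooth l h y)\<bar>"
    using l by (simp add: abs_mult)
  also have "\<dots> \<le> l * (\<bar>x - y\<bar> + \<bar>x - y\<bar>)"
    using lipschitz_on_1_abs_diff_le[OF h, of x y] exp_smooth_abs_diff_le[of x y] l
    by (intro mult_left_mono) (auto simp: abs_diff_le_iff)
  finally show ?thesis by simp
qed

lemma stein_exp_equation: "stein_exp' l h x / l - stein_exp l h x = h x - exp_smooth l h 0"
  using l by (simp add: stein_exp'_def stein_exp_def)

lemma stein_exp_primitive_has_real_derivative:
  assumes x: "0 < x"
  shows "(stein_exp_primitive l h has_real_derivative stein_exp l h x) (at x)"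
proof -
  have "(stein_exp_primitive l h has_real_derivative stein_exp l h x) (at x within {0..x + 1})"
    unfolding stein_exp_primitive_def[abs_def]
    using x continuous_on_stein_exp by (intro integral_has_real_derivative) auto
  moreover have "at x within {0..x + 1} = at x"
    using x by (intro at_within_interior) simp
  ultimately show ?thesis by simp
qed

lemma continuous_on_stein_exp_primitive: "continuous_on {0..b} (stein_exp_primitive l h)"
  unfolding stein_exp_primitive_def[abs_def]
  by (intro indefinite_integral_continuous_1 integrable_continuous_real continuous_on_stein_exp)

lemma stein_exp_primitive_abs_le:
  assumes x: "0 \<le> x"
  shows "\<bar>stein_exp_primitive l h x\<bar> \<le> x\<^sup>2"
proof -
  have "\<bar>stein_exp_primitive l h x - stein_exp_primitive l h 0\<bar> \<le> x * \<bar>x - 0\<bar>"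
    by (rule abs_diff_le_of_deriv_bound_between[OF continuous_on_stein_exp_primitive
          stein_exp_primitive_has_real_derivative])
       (use x in \<open>auto simp: min_def max_def intro: order_trans[OF stein_exp_abs_le]\<close>)
  with x show ?thesis by (simp add: stein_exp_primitive_def power2_eq_square)
qed

lemma stein_exp_taylor_1:
  assumes x: "0 \<le> x" and t: "0 \<le> t"
  shows "\<bar>stein_exp l h t - stein_exp l h x - stein_exp' l h x * (t - x)\<bar> \<le> 2 * l * (t - x)\<^sup>2"
proof -
  let ?r = "\<lambda>u. stein_exp l h u - stein_exp l h x - stein_exp' l h x * (u - x)"
  have "\<bar>?r t - ?r x\<bar> \<le> (2 * l * \<bar>t - x\<bar>) * \<bar>t - x\<bar>"
  proof (rule abs_diff_le_of_deriv_bound_between[OF _ _ x t])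
    show "continuous_on {0..b} ?r" for b
      using continuous_on_stein_exp by (auto intro!: continuous_intros)
    show "(?r has_real_derivative stein_exp' l h u - stein_exp' l h x) (at u)" if "0 < u" for u
      using that by (auto intro!: derivative_eq_intros stein_exp_has_real_derivative)
    fix u assume "min x t < u" "u < max x t"
    then have "\<bar>u - x\<bar> \<le> \<bar>t - x\<bar>" by (auto simp: min_def max_def split: if_splits)
    then show "\<bar>stein_exp' l h u - stein_exp' l h x\<bar> \<le> 2 * l * \<bar>t - x\<bar>"
      using stein_exp'_abs_diff_le[of u x] l by (smt (verit) mult_left_mono)
  qed
  then show ?thesis by (simp add: power2_eq_square abs_mult_self_eq mult.assoc)
qed

lemma stein_exp_primitive_taylor_2:
  assumes x: "0 \<le> x" and y: "0 \<le> y"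
  shows "\<bar>stein_exp_primitive l h y - stein_exp_primitive l h x - stein_exp l h x * (y - x)
           - stein_exp' l h x * (y - x)\<^sup>2 / 2\<bar> \<le> 2 * l * \<bar>y - x\<bar> ^ 3"
proof -
  let ?r = "\<lambda>u. stein_exp_primitive l h u - stein_exp_primitive l h x - stein_exp l h x * (u - x)
                 - stein_exp' l h x * (u - x)\<^sup>2 / 2"
  have "\<bar>?r y - ?r x\<bar> \<le> (2 * l * (y - x)\<^sup>2) * \<bar>y - x\<bar>"
  proof (rule abs_diff_le_of_deriv_bound_between[OF _ _ x y])
    show "continuous_on {0..b} ?r" for b
      using continuous_on_stein_exp_primitive by (auto intro!: continuous_intros)
    show "(?r has_real_derivative stein_exp l h u - stein_exp l h x - stein_exp' l h x * (u - x))
        (at u)" if "0 < u" for u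
      using that by (auto intro!: derivative_eq_intros stein_exp_primitive_has_real_derivative
          simp: field_simps)
    fix u assume u: "min x y < u" "u < max x y"
    then have "(u - x)\<^sup>2 \<le> (y - x)\<^sup>2"
      by (cases "x \<le> y") (auto simp: min_def max_def abs_le_square_iff[symmetric])
    moreover have "\<bar>stein_exp l h u - stein_exp l h x - stein_exp' l h x * (u - x)\<bar>
        \<le> 2 * l * (u - x)\<^sup>2"
      using stein_exp_taylor_1[OF x, of u] u x y by (cases "x \<le> y") (auto simp: min_def max_def)
    ultimately show "\<bar>stein_exp l h u - stein_exp l h x - stein_exp' l h x * (u - x)\<bar>
        \<le> 2 * l * (y - x)\<^sup>2"
      using l by (smt (verit) mult_left_mono)
  qed
  then show ?thesis by (simp add: power2_eq_square power3_eq_cube abs_mult mult.assoc)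
qed

text \<open>Second-order expansion of \<open>F(y) - F(x)\<close> in \<open>d\<close> alone, where the step \<open>y - x = d + u\<close>
  has a nonnegative part \<open>u\<close> that enters only linearly in the error.\<close>
lemma stein_exp_primitive_increment_le:
  assumes x: "0 \<le> x" and y: "0 \<le> y" and u: "0 \<le> u"
    and step: "y - x = d + u" and du: "\<bar>d\<bar> + u \<le> k" and xy: "x \<le> y + k"
  shows "\<bar>stein_exp_primitive l h y - stein_exp_primitive l h x - stein_exp l h x * d
           - stein_exp' l h x * d\<^sup>2 / 2\<bar> \<le> y * u + 3 * k * u + 2 * l * k ^ 3"
proof -
  let ?F = "stein_exp_primitive l h" and ?G = "stein_exp l h" and ?G' = "stein_exp' l h"
  define T where "T = ?F y - ?F x - ?G x * (y - x) - ?G' x * (y - x)\<^sup>2 / 2"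
  have "\<bar>T\<bar> \<le> 2 * l * \<bar>y - x\<bar> ^ 3"
    unfolding T_def by (rule stein_exp_primitive_taylor_2[OF x y])
  also have "\<dots> \<le> 2 * l * k ^ 3"
    using l du u by (intro mult_left_mono power_mono) (auto simp: step)
  finally have T_le: "\<bar>T\<bar> \<le> 2 * l * k ^ 3" .
  have "\<bar>?G x * u\<bar> \<le> x * u"
    using stein_exp_abs_le[OF x] u by (simp add: abs_mult mult_right_mono)
  also have "\<dots> \<le> (y + k) * u"
    using xy u by (rule mult_right_mono)
  finally have G_le: "\<bar>?G x * u\<bar> \<le> y * u + k * u" by (simp add: algebra_simps)
  have "\<bar>2 * d * u + u\<^sup>2\<bar> \<le> 2 * \<bar>d\<bar> * u + u * u"
    using u by (simp add: abs_mult power2_eq_square abs_triangle_ineq[THEN order_trans])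
  also have "\<dots> \<le> 2 * k * u + k * u"
    using du u by (intro add_mono mult_right_mono) auto
  finally have "\<bar>?G' x * (2 * d * u + u\<^sup>2)\<bar> \<le> 1 * (3 * k * u)"
    unfolding abs_mult using stein_exp'_abs_le by (intro mult_mono) auto
  then have G'_le: "\<bar>?G' x * (2 * d * u + u\<^sup>2) / 2\<bar> \<le> 2 * k * u"
    using du u by (simp add: mult_nonneg_nonneg)
  have "?F y - ?F x - ?G x * d - ?G' x * d\<^sup>2 / 2 = T + ?G x * u + ?G' x * (2 * d * u + u\<^sup>2) / 2"
    unfolding T_def step by (simp add: power2_eq_square algebra_simps)
  with T_le G_le G'_le show ?thesis by linarith
qed

end

section \<open>Products of independent factors\<close>

lemma integrable_pair_pmf_fst:
  fixes f :: "'a \<Rightarrow> real"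
  assumes "integrable (measure_pmf A) f"
  shows "integrable (measure_pmf (pair_pmf A B)) (\<lambda>z. f (fst z))"
proof -
  have "integrable (measure_pmf (map_pmf fst (pair_pmf A B))) f"
    using assms by (simp only: map_fst_pair_pmf)
  then show ?thesis by simp
qed

lemma integrable_pair_pmf_mult:
  fixes f :: "'a \<Rightarrow> real" and g :: "'b \<Rightarrow> real"
  assumes f: "integrable (measure_pmf A) f" and g: "\<And>b. b \<in> set_pmf B \<Longrightarrow> \<bar>g b\<bar> \<le> c"
  shows "integrable (measure_pmf (pair_pmf A B)) (\<lambda>z. f (fst z) * g (snd z))"
proof (rule Bochner_Integration.integrable_bound)
  show "integrable (measure_pmf (pair_pmf A B)) (\<lambda>z. c * \<bar>f (fst z)\<bar>)"
    using integrable_pair_pmf_fst[OF integrable_abs[OF f], of B] by simp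
  show "AE z in measure_pmf (pair_pmf A B). norm (f (fst z) * g (snd z)) \<le> norm (c * \<bar>f (fst z)\<bar>)"
  proof (rule AE_pmfI)
    fix z assume "z \<in> set_pmf (pair_pmf A B)"
    then have "\<bar>g (snd z)\<bar> \<le> c" using g by (cases z) auto
    then show "norm (f (fst z) * g (snd z)) \<le> norm (c * \<bar>f (fst z)\<bar>)"
      by (simp add: abs_mult mult.commute[of "\<bar>f (fst z)\<bar>"] mult_right_mono)
  qed
qed simp

lemma integral_pair_pmf_mult_nonneg:
  fixes f :: "'a \<Rightarrow> real" and g :: "'b \<Rightarrow> real"
  assumes f: "integrable (measure_pmf A) f" and f_nonneg: "\<And>a. 0 \<le> f a"
    and g_nonneg: "\<And>b. 0 \<le> g b" and g: "\<And>b. b \<in> set_pmf B \<Longrightarrow> g b \<le> c"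
  shows "(\<integral>z. f (fst z) * g (snd z) \<partial>pair_pmf A B) = (\<integral>a. f a \<partial>A) * (\<integral>b. g b \<partial>B)"
proof -
  have g_int: "integrable (measure_pmf B) g"
    by (rule measure_pmf.integrable_const_bound[where B=c]) (use g_nonneg g in \<open>auto intro!: AE_pmfI\<close>)
  have "ennreal (\<integral>z. f (fst z) * g (snd z) \<partial>pair_pmf A B)
      = (\<integral>\<^sup>+z. ennreal (f (fst z) * g (snd z)) \<partial>pair_pmf A B)"
    using integrable_pair_pmf_mult[OF f, of B g c] g g_nonneg f_nonneg
    by (intro nn_integral_eq_integral[symmetric]) auto
  also have "\<dots> = (\<integral>\<^sup>+a. ennreal (f a) \<partial>A) * (\<integral>\<^sup>+b. ennreal (g b) \<partial>B)"
    by (simp add: nn_integral_pair_pmf' ennreal_mult f_nonneg g_nonneg nn_integral_cmult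
        nn_integral_multc)
  also have "\<dots> = ennreal ((\<integral>a. f a \<partial>A) * (\<integral>b. g b \<partial>B))"
    by (simp add: nn_integral_eq_integral f g_int f_nonneg g_nonneg ennreal_mult)
  finally show ?thesis
    by (subst (asm) ennreal_inj) (auto intro!: integral_nonneg_AE mult_nonneg_nonneg f_nonneg g_nonneg)
qed

lemma integral_pair_pmf_mult_nonneg_right:
  fixes f :: "'a \<Rightarrow> real" and g :: "'b \<Rightarrow> real"
  assumes f: "integrable (measure_pmf A) f"
    and g_nonneg: "\<And>b. 0 \<le> g b" and g: "\<And>b. b \<in> set_pmf B \<Longrightarrow> g b \<le> c"
  shows "(\<integral>z. f (fst z) * g (snd z) \<partial>pair_pmf A B) = (\<integral>a. f a \<partial>A) * (\<integral>b. g b \<partial>B)"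
proof -
  define f\<^sub>1 where "f\<^sub>1 a = max (f a) 0" for a
  define f\<^sub>2 where "f\<^sub>2 a = max (- f a) 0" for a
  have f\<^sub>1: "integrable (measure_pmf A) f\<^sub>1" and f\<^sub>2: "integrable (measure_pmf A) f\<^sub>2"
    unfolding f\<^sub>1_def f\<^sub>2_def using f by auto
  have g_abs: "b \<in> set_pmf B \<Longrightarrow> \<bar>g b\<bar> \<le> c" for b
    using g g_nonneg by (simp add: abs_of_nonneg)
  have f_eq: "f = (\<lambda>a. f\<^sub>1 a - f\<^sub>2 a)" by (auto simp: f\<^sub>1_def f\<^sub>2_def fun_eq_iff)
  have "(\<integral>z. f (fst z) * g (snd z) \<partial>pair_pmf A B)
      = (\<integral>z. f\<^sub>1 (fst z) * g (snd z) - f\<^sub>2 (fst z) * g (snd z) \<partial>pair_pmf A B)"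
    by (simp add: f_eq left_diff_distrib)
  also have "\<dots> = (\<integral>z. f\<^sub>1 (fst z) * g (snd z) \<partial>pair_pmf A B) - (\<integral>z. f\<^sub>2 (fst z) * g (snd z) \<partial>pair_pmf A B)"
    by (rule Bochner_Integration.integral_diff[OF integrable_pair_pmf_mult[OF f\<^sub>1, of B g c, OF g_abs]
          integrable_pair_pmf_mult[OF f\<^sub>2, of B g c, OF g_abs]])
  also have "(\<integral>z. f\<^sub>1 (fst z) * g (snd z) \<partial>pair_pmf A B) = (\<integral>a. f\<^sub>1 a \<partial>A) * (\<integral>b. g b \<partial>B)"
    by (rule integral_pair_pmf_mult_nonneg[OF f\<^sub>1, of g B c]) (auto simp: f\<^sub>1_def g_nonneg g)
  also have "(\<integral>z. f\<^sub>2 (fst z) * g (snd z) \<partial>pair_pmf A B) = (\<integral>a. f\<^sub>2 a \<partial>A) * (\<integral>b. g b \<partial>B)"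
    by (rule integral_pair_pmf_mult_nonneg[OF f\<^sub>2, of g B c]) (auto simp: f\<^sub>2_def g_nonneg g)
  also have "(\<integral>a. f\<^sub>1 a \<partial>A) * (\<integral>b. g b \<partial>B) - (\<integral>a. f\<^sub>2 a \<partial>A) * (\<integral>b. g b \<partial>B)
      = ((\<integral>a. f\<^sub>1 a \<partial>A) - (\<integral>a. f\<^sub>2 a \<partial>A)) * (\<integral>b. g b \<partial>B)"
    by (rule left_diff_distrib[symmetric])
  also have "(\<integral>a. f\<^sub>1 a \<partial>A) - (\<integral>a. f\<^sub>2 a \<partial>A) = (\<integral>a. f a \<partial>A)"
    using f\<^sub>1 f\<^sub>2 by (simp add: f_eq)
  finally show ?thesis .
qed

lemma integral_pair_pmf_mult:
  fixes f :: "'a \<Rightarrow> real" and g :: "'b \<Rightarrow> real"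
  assumes f: "integrable (measure_pmf A) f" and g: "\<And>b. b \<in> set_pmf B \<Longrightarrow> \<bar>g b\<bar> \<le> c"
  shows "(\<integral>z. f (fst z) * g (snd z) \<partial>pair_pmf A B) = (\<integral>a. f a \<partial>A) * (\<integral>b. g b \<partial>B)"
proof -
  define g\<^sub>1 where "g\<^sub>1 b = max 0 (g b + c)" for b
  have g\<^sub>1_eq: "b \<in> set_pmf B \<Longrightarrow> g\<^sub>1 b = g b + c" for b
    using g[of b] unfolding g\<^sub>1_def by auto
  have "integrable (measure_pmf B) g"
    by (rule measure_pmf.integrable_const_bound[where B=c]) (use g in \<open>auto intro!: AE_pmfI\<close>)
  then have Eg\<^sub>1: "(\<integral>b. g\<^sub>1 b \<partial>B) = (\<integral>b. g b \<partial>B) + c"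
    using integral_cong_AE[of g\<^sub>1 B "\<lambda>b. g b + c"] by (simp add: AE_pmfI g\<^sub>1_eq measure_pmf.prob_space)
  have "(\<integral>z. f (fst z) * g (snd z) \<partial>pair_pmf A B)
      = (\<integral>z. f (fst z) * g\<^sub>1 (snd z) - c * f (fst z) \<partial>pair_pmf A B)"
    by (intro integral_cong_AE AE_pmfI) (auto simp: g\<^sub>1_eq algebra_simps)
  also have "\<dots> = (\<integral>z. f (fst z) * g\<^sub>1 (snd z) \<partial>pair_pmf A B) - c * (\<integral>a. f a \<partial>A)"
  proof -
    have "integrable (measure_pmf (pair_pmf A B)) (\<lambda>z. f (fst z) * g\<^sub>1 (snd z))"
      by (rule integrable_pair_pmf_mult[OF f, of B g\<^sub>1 "2 * c"]) (use g in \<open>force simp: g\<^sub>1_def\<close>)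
    moreover have "integrable (measure_pmf (pair_pmf A B)) (\<lambda>z. c * f (fst z))"
      using integrable_pair_pmf_fst[OF f, of B] by (rule integrable_mult_right)
    ultimately show ?thesis by simp
  qed
  also have "(\<integral>z. f (fst z) * g\<^sub>1 (snd z) \<partial>pair_pmf A B) = (\<integral>a. f a \<partial>A) * (\<integral>b. g\<^sub>1 b \<partial>B)"
    by (rule integral_pair_pmf_mult_nonneg_right[OF f, of g\<^sub>1 B "2 * c"]) (use g in \<open>force simp: g\<^sub>1_def\<close>)+
  finally show ?thesis by (simp add: Eg\<^sub>1 algebra_simps)
qed

section \<open>A load balancing system in steady state\<close>

lemma l1_nonneg: "0 \<le> l1 N v"
  by (simp add: l1_def sum_nonneg)

lemma l1_next_queue_minus_unused:
  "l1 N (next_queue N q x s) - l1 N (unused N q x s) = l1 N q + l1 N x - l1 N s"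
proof -
  have "real (q n + x n - s n) - real (s n - (x n + q n)) = real (q n) + real (x n) - real (s n)"
    for n by (cases "s n \<le> q n + x n") auto
  then have "l1 N (next_queue N q x s) - l1 N (unused N q x s)
      = (\<Sum>n<N. real (q n) + real (x n) - real (s n))"
    by (simp add: l1_def next_queue_def unused_def sum_subtractf[symmetric])
  then show ?thesis by (simp add: l1_def sum.distrib sum_subtractf)
qed

locale lb_stationary =
  fixes N :: nat and ar :: "nat pmf" and policy :: "qvec \<Rightarrow> nat \<Rightarrow> qvec pmf"
    and serv :: "nat \<Rightarrow> nat pmf" and p :: "qvec pmf" and A_max S_max :: nat
  assumes serv_bdd: "\<And>n. n < N \<Longrightarrow> set_pmf (serv n) \<subseteq> {..S_max}"
    and arr_bdd: "set_pmf ar \<subseteq> {..A_max}"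
    and policy_ok: "\<And>q a x. x \<in> set_pmf (policy q a) \<Longrightarrow> (\<Sum>n<N. x n) = a"
    and stationary: "stationary N ar policy serv p"
    and moments: "\<And>k. integrable (measure_pmf p) (\<lambda>q. l1 N q ^ k)"
begin

abbreviation services :: "qvec pmf" where
  "services \<equiv> Pi_pmf {..<N} 0 serv"

abbreviation joint :: "(qvec \<times> qvec \<times> qvec) pmf" where
  "joint \<equiv> steady_joint N ar policy serv p"

definition net_input :: "real pmf" where
  "net_input = map_pmf (\<lambda>(a, s). real a - l1 N s) (pair_pmf ar services)"

definition queue_len :: "qvec \<times> qvec \<times> qvec \<Rightarrow> real" where
  "queue_len = (\<lambda>(q, x, s). l1 N q)"

definition next_len :: "qvec \<times> qvec \<times> qvec \<Rightarrow> real" where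
  "next_len = (\<lambda>(q, x, s). l1 N (next_queue N q x s))"

definition unused_len :: "qvec \<times> qvec \<times> qvec \<Rightarrow> real" where
  "unused_len = (\<lambda>(q, x, s). l1 N (unused N q x s))"

definition net_arrival :: "qvec \<times> qvec \<times> qvec \<Rightarrow> real" where
  "net_arrival = (\<lambda>(q, x, s). l1 N x - l1 N s)"

lemma finite_set_services: "finite (set_pmf services)"
  by (auto simp: set_Pi_pmf intro!: finite_subset[OF serv_bdd])

lemma l1_services_le: "s \<in> set_pmf services \<Longrightarrow> l1 N s \<le> real N * real S_max"
proof -
  assume "s \<in> set_pmf services"
  then have "s n \<le> S_max" if "n < N" for n
    using serv_bdd[OF that] that by (auto simp: set_Pi_pmf PiE_dflt_def)
  then have "(\<Sum>n<N. s n) \<le> N * S_max"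
    using sum_mono[of "{..<N}" s "\<lambda>_. S_max"] by simp
  then show ?thesis unfolding l1_def by (metis of_nat_le_iff of_nat_mult)
qed

lemma arrival_le: "a \<in> set_pmf ar \<Longrightarrow> real a \<le> real A_max"
  using arr_bdd by auto

lemma finite_set_net_input: "finite (set_pmf net_input)"
  using finite_subset[OF arr_bdd] finite_set_services by (simp add: net_input_def)

lemma l1_policy: "x \<in> set_pmf (policy q a) \<Longrightarrow> l1 N x = real a"
  by (simp add: l1_def policy_ok)

text \<open>Bounds the one-slot change \<open>|\<Sigma>Q(t+1) - \<Sigma>Q(t)| \<le> |D| + U\<close> of the total queue length.\<close>
definition slot_bound :: real where
  "slot_bound = real A_max + 2 * (real N * real S_max)"

lemma slot_bound_nonneg: "0 \<le> slot_bound"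
  by (simp add: slot_bound_def)

lemma slot_lengths_nonneg: "0 \<le> queue_len z" "0 \<le> next_len z" "0 \<le> unused_len z"
  by (simp_all add: queue_len_def next_len_def unused_len_def l1_nonneg split: prod.split)

lemma set_pmf_joint:
  assumes "(q, x, s) \<in> set_pmf joint"
  shows "l1 N x \<le> real A_max" and "s \<in> set_pmf services"
proof -
  obtain a where "a \<in> set_pmf ar" "x \<in> set_pmf (policy q a)" "s \<in> set_pmf services"
    using assms by (auto simp: steady_joint_def lb_slot_def)
  then show "l1 N x \<le> real A_max" "s \<in> set_pmf services"
    using policy_ok arrival_le by (auto simp: l1_def)
qed

lemma slot_bounds:
  assumes z: "z \<in> set_pmf joint"
  shows "\<bar>net_arrival z\<bar> + unused_len z \<le> slot_bound"
    and "next_len z \<le> queue_len z + real A_max"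
    and "queue_len z \<le> next_len z + slot_bound"
proof -
  obtain q x s where [simp]: "z = (q, x, s)" by (cases z)
  have x: "l1 N x \<le> real A_max" and s: "l1 N s \<le> real N * real S_max"
    using set_pmf_joint[of q x s] l1_services_le z by auto
  have "l1 N (unused N q x s) \<le> l1 N s"
    and "l1 N (next_queue N q x s) \<le> l1 N q + l1 N x"
    and "l1 N q \<le> l1 N (next_queue N q x s) + l1 N s"
    by (auto simp: l1_def unused_def next_queue_def sum.distrib[symmetric]
        simp flip: of_nat_sum of_nat_add intro!: sum_mono)
  moreover have "0 \<le> real A_max" "0 \<le> real N * real S_max" by simp_all
  ultimately show "\<bar>net_arrival z\<bar> + unused_len z \<le> slot_bound"
    and "next_len z \<le> queue_len z + real A_max"
    and "queue_len z \<le> next_len z + slot_bound"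
    using x s l1_nonneg[of N x] l1_nonneg[of N s]
    by (auto simp: unused_len_def next_len_def queue_len_def net_arrival_def slot_bound_def
        abs_le_iff)
qed

lemma abs_net_arrival_le: "z \<in> set_pmf joint \<Longrightarrow> \<bar>net_arrival z\<bar> \<le> slot_bound"
  using slot_bounds(1) slot_lengths_nonneg(3)[of z] by fastforce

lemma unused_len_le: "z \<in> set_pmf joint \<Longrightarrow> unused_len z \<le> slot_bound"
  using slot_bounds(1) abs_ge_zero[of "net_arrival z"] by fastforce

lemma next_len_minus_unused_len: "next_len z - unused_len z = queue_len z + net_arrival z"
  by (cases z) (simp add: next_len_def unused_len_def queue_len_def net_arrival_def
      l1_next_queue_minus_unused)

lemma map_pmf_fst_joint: "map_pmf fst joint = p"
  unfolding steady_joint_def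
  by (simp add: map_bind_pmf map_pmf_comp case_prod_unfold bind_return_pmf')

lemma map_pmf_next_queue_joint: "map_pmf (\<lambda>(q, x, s). next_queue N q x s) joint = p"
  using stationary unfolding stationary_def steady_joint_def lb_kernel_def
  by (simp add: map_bind_pmf map_pmf_comp case_prod_unfold)

text \<open>The policy only splits \<open>A\<^sub>\<Sigma>\<close>, so the net input of a slot is independent of \<open>Q(t)\<close>.\<close>
lemma map_pmf_net_arrival_joint: "map_pmf (\<lambda>z. (fst z, net_arrival z)) joint = pair_pmf p net_input"
proof -
  have slot: "map_pmf (\<lambda>(x, s). (q, l1 N x - l1 N s)) (lb_slot N ar policy serv q)
      = map_pmf (Pair q) net_input" for q
  proof -
    have "map_pmf (\<lambda>(x, s). (q, l1 N x - l1 N s)) (lb_slot N ar policy serv q)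
        = bind_pmf ar (\<lambda>a. bind_pmf (policy q a)
            (\<lambda>x. bind_pmf services (\<lambda>s. return_pmf (q, l1 N x - l1 N s))))"
      unfolding lb_slot_def by (simp add: map_bind_pmf)
    also have "\<dots> = bind_pmf ar (\<lambda>a. bind_pmf (policy q a)
            (\<lambda>x. bind_pmf services (\<lambda>s. return_pmf (q, real a - l1 N s))))"
      by (intro bind_pmf_cong refl) (simp add: l1_policy)
    finally show ?thesis
      by (simp add: net_input_def pair_pmf_def map_bind_pmf)
  qed
  have "map_pmf (\<lambda>z. (fst z, net_arrival z)) joint
      = bind_pmf p (\<lambda>q. map_pmf (\<lambda>(x, s). (q, l1 N x - l1 N s)) (lb_slot N ar policy serv q))"
    unfolding steady_joint_def
    by (simp add: map_bind_pmf map_pmf_comp case_prod_unfold net_arrival_def)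
  also have "\<dots> = pair_pmf p net_input"
    by (simp only: slot) (simp add: pair_pmf_def map_pmf_def)
  finally show ?thesis .
qed

lemma integrable_arrivals: "integrable (measure_pmf ar) (f :: nat \<Rightarrow> real)"
  by (rule integrable_measure_pmf_finite) (rule finite_subset[OF arr_bdd], simp)

lemma integrable_services: "integrable (measure_pmf services) (f :: qvec \<Rightarrow> real)"
  by (rule integrable_measure_pmf_finite[OF finite_set_services])

lemma integrable_pair_arrivals_services:
  "integrable (measure_pmf (pair_pmf ar services)) (f :: nat \<times> qvec \<Rightarrow> real)"
  by (rule integrable_measure_pmf_finite)
     (use finite_subset[OF arr_bdd] finite_set_services in simp)

lemma expectation_l1_services:
  "measure_pmf.expectation services (l1 N) = (\<Sum>n<N. measure_pmf.expectation (serv n) real)"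
proof -
  have "measure_pmf.expectation services (l1 N)
      = (\<Sum>n<N. measure_pmf.expectation services (\<lambda>s. real (s n)))"
    unfolding l1_def using integrable_services
    by (subst Bochner_Integration.integral_sum[symmetric]) simp_all
  also have "\<dots> = (\<Sum>n<N. measure_pmf.expectation (serv n) real)"
  proof (rule sum.cong[OF refl])
    fix n assume "n \<in> {..<N}"
    then have "map_pmf (\<lambda>s. s n) services = serv n" by (simp add: Pi_pmf_component)
    then show "measure_pmf.expectation services (\<lambda>s. real (s n))
        = measure_pmf.expectation (serv n) real"
      by (metis integral_map_pmf)
  qed
  finally show ?thesis .
qed

lemma expectation_l1_services_le: "measure_pmf.expectation services (l1 N) \<le> real N * real S_max"
proof -
  have "measure_pmf.expectation services (l1 N)
      \<le> measure_pmf.expectation services (\<lambda>_. real N * real S_max)"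
    by (intro integral_mono_AE integrable_services AE_pmfI l1_services_le)
  then show ?thesis by (simp add: measure_pmf.prob_space)
qed

lemma expectation_net_input:
  "measure_pmf.expectation net_input (\<lambda>d. d)
     = measure_pmf.expectation ar real - measure_pmf.expectation services (l1 N)"
  unfolding net_input_def using integrable_pair_arrivals_services
  by (simp add: case_prod_unfold)

lemma expectation_net_input_sq:
  "measure_pmf.expectation net_input (\<lambda>d. d\<^sup>2)
     = measure_pmf.variance ar real + measure_pmf.variance services (l1 N)
       + (measure_pmf.expectation ar real - measure_pmf.expectation services (l1 N))\<^sup>2"
proof -
  let ?EA = "measure_pmf.expectation ar" and ?ES = "measure_pmf.expectation services"
  have "measure_pmf.expectation net_input (\<lambda>d. d\<^sup>2)
      = measure_pmf.expectation (pair_pmf ar services)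
          (\<lambda>z. (real (fst z))\<^sup>2 + (l1 N (snd z))\<^sup>2 - 2 * (real (fst z) * l1 N (snd z)))"
    unfolding net_input_def by (simp add: case_prod_unfold power2_diff mult.assoc)
  also have "\<dots> = ?EA (\<lambda>a. (real a)\<^sup>2) + ?ES (\<lambda>s. (l1 N s)\<^sup>2) - 2 * (?EA real * ?ES (l1 N))"
    using integrable_pair_arrivals_services
      integral_pair_pmf_mult[OF integrable_arrivals, of services "l1 N" "real N * real S_max"]
      l1_services_le l1_nonneg
      expectation_pair_pmf_fst[of ar services "\<lambda>a. (real a)\<^sup>2"]
      expectation_pair_pmf_snd[of ar services "\<lambda>s. (l1 N s)\<^sup>2"]
    by simp
  also have "\<dots> = measure_pmf.variance ar real + measure_pmf.variance services (l1 N)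
       + (?EA real - ?ES (l1 N))\<^sup>2"
    using measure_pmf.variance_eq[OF integrable_arrivals integrable_arrivals, of real]
      measure_pmf.variance_eq[OF integrable_services integrable_services, of "l1 N"]
    by (simp add: power2_diff)
  finally show ?thesis .
qed

lemma expectation_joint_queue_len:
  fixes f :: "real \<Rightarrow> real"
  shows "measure_pmf.expectation joint (\<lambda>z. f (queue_len z)) = measure_pmf.expectation p (\<lambda>q. f (l1 N q))"
  using integral_map_pmf[of fst joint "\<lambda>q. f (l1 N q)"]
  by (simp add: map_pmf_fst_joint queue_len_def case_prod_unfold)

lemma expectation_joint_next_len:
  fixes f :: "real \<Rightarrow> real"
  shows "measure_pmf.expectation joint (\<lambda>z. f (next_len z)) = measure_pmf.expectation p (\<lambda>q. f (l1 N q))"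
proof -
  have "measure_pmf.expectation joint (\<lambda>z. f (next_len z))
      = measure_pmf.expectation (map_pmf (\<lambda>(q, x, s). next_queue N q x s) joint) (\<lambda>q. f (l1 N q))"
    by (simp add: next_len_def case_prod_unfold)
  then show ?thesis by (simp only: map_pmf_next_queue_joint)
qed

lemma expectation_joint_mult_net_arrival:
  fixes f g :: "real \<Rightarrow> real"
  assumes f: "integrable (measure_pmf p) (\<lambda>q. f (l1 N q))"
  shows "measure_pmf.expectation joint (\<lambda>z. f (queue_len z) * g (net_arrival z))
       = measure_pmf.expectation p (\<lambda>q. f (l1 N q)) * measure_pmf.expectation net_input g"
proof -
  define c where "c = Max ((\<lambda>d. \<bar>g d\<bar>) ` set_pmf net_input)"
  have g: "d \<in> set_pmf net_input \<Longrightarrow> \<bar>g d\<bar> \<le> c" for d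
    unfolding c_def using finite_set_net_input by (intro Max_ge) auto
  have "measure_pmf.expectation joint (\<lambda>z. f (queue_len z) * g (net_arrival z))
      = measure_pmf.expectation (map_pmf (\<lambda>z. (fst z, net_arrival z)) joint)
          (\<lambda>z. f (l1 N (fst z)) * g (snd z))"
    by (simp add: queue_len_def case_prod_unfold)
  also have "\<dots> = measure_pmf.expectation p (\<lambda>q. f (l1 N q)) * measure_pmf.expectation net_input g"
    unfolding map_pmf_net_arrival_joint by (rule integral_pair_pmf_mult[OF f g])
  finally show ?thesis .
qed

lemma integrable_joint_of_le:
  fixes f :: "qvec \<times> qvec \<times> qvec \<Rightarrow> real"
  assumes "\<And>z. z \<in> set_pmf joint \<Longrightarrow> \<bar>f z\<bar> \<le> a + b * queue_len z + c * (queue_len z)\<^sup>2"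
  shows "integrable (measure_pmf joint) f"
proof (rule Bochner_Integration.integrable_bound)
  have "integrable (measure_pmf (map_pmf fst joint)) (\<lambda>q. a + b * l1 N q ^ 1 + c * l1 N q ^ 2)"
    unfolding map_pmf_fst_joint using moments[of 1] moments[of 2] by simp
  then show "integrable (measure_pmf joint) (\<lambda>z. a + b * queue_len z + c * (queue_len z)\<^sup>2)"
    by (simp add: queue_len_def case_prod_unfold)
  show "AE z in measure_pmf joint. norm (f z) \<le> norm (a + b * queue_len z + c * (queue_len z)\<^sup>2)"
    using assms by (intro AE_pmfI) force
qed simp

lemma integrable_joint_queue_len: "integrable (measure_pmf joint) queue_len"
  by (rule integrable_joint_of_le[where a=0 and b=1 and c=0]) (simp add: slot_lengths_nonneg)

lemma integrable_joint_next_len: "integrable (measure_pmf joint) next_len"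
proof (rule integrable_joint_of_le[where a="real A_max" and b=1 and c=0])
  fix z assume "z \<in> set_pmf joint"
  then show "\<bar>next_len z\<bar> \<le> real A_max + 1 * queue_len z + 0 * (queue_len z)\<^sup>2"
    using slot_bounds(2)[of z] slot_lengths_nonneg(2)[of z] by simp
qed

lemma integrable_joint_net_arrival: "integrable (measure_pmf joint) net_arrival"
  by (rule integrable_joint_of_le[where a=slot_bound and b=0 and c=0])
     (simp add: abs_net_arrival_le)

lemma expectation_unused_len:
  "measure_pmf.expectation joint unused_len = - measure_pmf.expectation net_input (\<lambda>d. d)"
proof -
  have "measure_pmf.expectation joint unused_len
      = measure_pmf.expectation joint (\<lambda>z. next_len z - queue_len z - net_arrival z)"
    using next_len_minus_unused_len by (intro Bochner_Integration.integral_cong) (auto simp: algebra_simps)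
  also have "\<dots> = - measure_pmf.expectation joint net_arrival"
    using integrable_joint_queue_len integrable_joint_next_len integrable_joint_net_arrival
      expectation_joint_next_len[of "\<lambda>x. x"] expectation_joint_queue_len[of "\<lambda>x. x"]
    by simp
  also have "measure_pmf.expectation joint net_arrival = measure_pmf.expectation net_input (\<lambda>d. d)"
    using expectation_joint_mult_net_arrival[of "\<lambda>_. 1" "\<lambda>d. d"]
    by (simp add: measure_pmf.prob_space)
  finally show ?thesis .
qed

subsection \<open>The Stein drift argument\<close>

text \<open>The increment of \<open>F(\<epsilon> \<Sigma>Q)\<close> over a slot, minus its Taylor polynomial in the net arrival
  \<open>D\<close> (the true increment of \<open>\<Sigma>Q\<close> is \<open>D + U\<close>).\<close>
definition stein_increment :: "real \<Rightarrow> (real \<Rightarrow> real) \<Rightarrow> real \<Rightarrow> qvec \<times> qvec \<times> qvec \<Rightarrow> real" where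
  "stein_increment l h \<epsilon> z =
     stein_exp_primitive l h (\<epsilon> * next_len z) - stein_exp_primitive l h (\<epsilon> * queue_len z)
     - \<epsilon> * stein_exp l h (\<epsilon> * queue_len z) * net_arrival z
     - \<epsilon>\<^sup>2 / 2 * stein_exp' l h (\<epsilon> * queue_len z) * (net_arrival z)\<^sup>2"

lemma minus_expectation_net_input_le: "- measure_pmf.expectation net_input (\<lambda>d. d) \<le> slot_bound"
proof -
  have "0 \<le> measure_pmf.expectation ar real" "0 \<le> real A_max" "0 \<le> real N * real S_max"
    by simp_all
  then show ?thesis
    using expectation_l1_services_le unfolding expectation_net_input slot_bound_def by linarith
qed

lemma next_len_mult_unused_len_le:
  assumes "z \<in> set_pmf joint"
  shows "next_len z * unused_len z \<le> (queue_len z + real A_max) * slot_bound"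
    and "0 \<le> next_len z * unused_len z"
  using slot_bounds(2)[OF assms] unused_len_le[OF assms] slot_lengths_nonneg[of z]
  by (auto intro!: mult_mono)

lemma integrable_next_len_mult_unused_len:
  "integrable (measure_pmf joint) (\<lambda>z. next_len z * unused_len z)"
  by (rule integrable_joint_of_le[where a="real A_max * slot_bound" and b=slot_bound and c=0])
     (use next_len_mult_unused_len_le in \<open>auto simp: algebra_simps\<close>)

lemma integrable_unused_len: "integrable (measure_pmf joint) unused_len"
  by (rule integrable_joint_of_le[where a=slot_bound and b=0 and c=0])
     (simp add: slot_lengths_nonneg unused_len_le)

context
  fixes l :: real and h :: "real \<Rightarrow> real" and \<epsilon> :: real
  assumes l: "0 < l" and h: "lipschitz_on 1 UNIV h" and \<epsilon>: "0 < \<epsilon>"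
begin

lemma abs_stein_increment_le:
  assumes z: "z \<in> set_pmf joint"
  shows "\<bar>stein_increment l h \<epsilon> z\<bar>
    \<le> \<epsilon>\<^sup>2 * (next_len z * unused_len z) + 3 * \<epsilon>\<^sup>2 * slot_bound * unused_len z
       + 2 * l * \<epsilon> ^ 3 * slot_bound ^ 3"
proof -
  have "\<bar>stein_increment l h \<epsilon> z\<bar> \<le> (\<epsilon> * next_len z) * (\<epsilon> * unused_len z)
      + 3 * (\<epsilon> * slot_bound) * (\<epsilon> * unused_len z) + 2 * l * (\<epsilon> * slot_bound) ^ 3"
    unfolding stein_increment_def
  proof (rule order_trans[OF _ stein_exp_primitive_increment_le[OF l h]])
    show "\<epsilon> * next_len z - \<epsilon> * queue_len z = \<epsilon> * net_arrival z + \<epsilon> * unused_len z"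
      using next_len_minus_unused_len[of z] by (simp add: algebra_simps)
    show "\<bar>\<epsilon> * net_arrival z\<bar> + \<epsilon> * unused_len z \<le> \<epsilon> * slot_bound"
      using slot_bounds(1)[OF z] \<epsilon> by (simp add: abs_mult flip: distrib_left)
    show "\<epsilon> * queue_len z \<le> \<epsilon> * next_len z + \<epsilon> * slot_bound"
      using slot_bounds(3)[OF z] \<epsilon> by (simp flip: distrib_left)
  qed (use slot_lengths_nonneg \<epsilon> in \<open>simp_all add: power_mult_distrib mult_ac\<close>)
  then show ?thesis by (simp add: power2_eq_square power3_eq_cube algebra_simps)
qed

lemma integrable_stein_exp_l1: "integrable (measure_pmf p) (\<lambda>q. stein_exp l h (\<epsilon> * l1 N q))"
proof (rule Bochner_Integration.integrable_bound)
  show "integrable (measure_pmf p) (\<lambda>q. \<epsilon> * l1 N q ^ 1)" using moments[of 1] by simp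
  show "AE q in measure_pmf p. norm (stein_exp l h (\<epsilon> * l1 N q)) \<le> norm (\<epsilon> * l1 N q ^ 1)"
    using stein_exp_abs_le[OF l h] \<epsilon> l1_nonneg by (intro AE_I2) (simp add: abs_mult)
qed simp

lemma integrable_stein_exp'_l1: "integrable (measure_pmf p) (\<lambda>q. stein_exp' l h (\<epsilon> * l1 N q))"
  by (rule measure_pmf.integrable_const_bound[where B=1]) (simp_all add: stein_exp'_abs_le[OF l h])

lemma integrable_stein_exp_primitive_next_len:
  "integrable (measure_pmf joint) (\<lambda>z. stein_exp_primitive l h (\<epsilon> * next_len z))"
proof (rule integrable_joint_of_le[where a="\<epsilon>\<^sup>2 * real A_max ^ 2" and b="2 * \<epsilon>\<^sup>2 * real A_max" and c="\<epsilon>\<^sup>2"])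
  fix z assume "z \<in> set_pmf joint"
  then have "(\<epsilon> * next_len z)\<^sup>2 \<le> (\<epsilon> * (queue_len z + real A_max))\<^sup>2"
    using slot_bounds(2) \<epsilon> slot_lengths_nonneg(2) by (intro power_mono) auto
  then show "\<bar>stein_exp_primitive l h (\<epsilon> * next_len z)\<bar>
      \<le> \<epsilon>\<^sup>2 * real A_max ^ 2 + 2 * \<epsilon>\<^sup>2 * real A_max * queue_len z + \<epsilon>\<^sup>2 * (queue_len z)\<^sup>2"
    using stein_exp_primitive_abs_le[OF l h, of "\<epsilon> * next_len z"] \<epsilon> slot_lengths_nonneg(2)[of z]
    by (simp add: power2_eq_square algebra_simps)
qed

lemma integrable_stein_exp_primitive_queue_len:
  "integrable (measure_pmf joint) (\<lambda>z. stein_exp_primitive l h (\<epsilon> * queue_len z))"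
proof (rule integrable_joint_of_le[where a=0 and b=0 and c="\<epsilon>\<^sup>2"])
  fix z
  show "\<bar>stein_exp_primitive l h (\<epsilon> * queue_len z)\<bar> \<le> 0 + 0 * queue_len z + \<epsilon>\<^sup>2 * (queue_len z)\<^sup>2"
    using stein_exp_primitive_abs_le[OF l h, of "\<epsilon> * queue_len z"] \<epsilon> slot_lengths_nonneg(1)[of z]
    by (simp add: power_mult_distrib)
qed

lemma integrable_stein_exp_mult_net_arrival:
  "integrable (measure_pmf joint) (\<lambda>z. stein_exp l h (\<epsilon> * queue_len z) * net_arrival z)"
proof (rule integrable_joint_of_le[where a=0 and b="\<epsilon> * slot_bound" and c=0])
  fix z assume "z \<in> set_pmf joint"
  then have "\<bar>stein_exp l h (\<epsilon> * queue_len z) * net_arrival z\<bar> \<le> (\<epsilon> * queue_len z) * slot_bound"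
    unfolding abs_mult using abs_net_arrival_le stein_exp_abs_le[OF l h] \<epsilon> slot_lengths_nonneg(1)
    by (intro mult_mono) auto
  then show "\<bar>stein_exp l h (\<epsilon> * queue_len z) * net_arrival z\<bar>
      \<le> 0 + \<epsilon> * slot_bound * queue_len z + 0 * (queue_len z)\<^sup>2"
    by (simp add: algebra_simps)
qed

lemma integrable_stein_exp'_mult_net_arrival_sq:
  "integrable (measure_pmf joint) (\<lambda>z. stein_exp' l h (\<epsilon> * queue_len z) * (net_arrival z)\<^sup>2)"
proof (rule integrable_joint_of_le[where a="slot_bound\<^sup>2" and b=0 and c=0])
  fix z assume "z \<in> set_pmf joint"
  then have "(net_arrival z)\<^sup>2 \<le> slot_bound\<^sup>2"
    using abs_net_arrival_le[of z] slot_bound_nonneg by (simp add: abs_le_square_iff[symmetric])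
  then have "\<bar>stein_exp' l h (\<epsilon> * queue_len z) * (net_arrival z)\<^sup>2\<bar> \<le> 1 * slot_bound\<^sup>2"
    unfolding abs_mult using stein_exp'_abs_le[OF l h] by (intro mult_mono) auto
  then show "\<bar>stein_exp' l h (\<epsilon> * queue_len z) * (net_arrival z)\<^sup>2\<bar>
      \<le> slot_bound\<^sup>2 + 0 * queue_len z + 0 * (queue_len z)\<^sup>2"
    by simp
qed

lemma expectation_stein_increment:
  "measure_pmf.expectation joint (stein_increment l h \<epsilon>)
     = - \<epsilon> * measure_pmf.expectation net_input (\<lambda>d. d)
         * measure_pmf.expectation p (\<lambda>q. stein_exp l h (\<epsilon> * l1 N q))
       - \<epsilon>\<^sup>2 / 2 * measure_pmf.expectation net_input (\<lambda>d. d\<^sup>2)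
         * measure_pmf.expectation p (\<lambda>q. stein_exp' l h (\<epsilon> * l1 N q))"
proof -
  let ?F = "stein_exp_primitive l h" and ?G = "stein_exp l h" and ?G' = "stein_exp' l h"
  have "measure_pmf.expectation joint (stein_increment l h \<epsilon>)
      = measure_pmf.expectation joint (\<lambda>z. ?F (\<epsilon> * next_len z))
        - measure_pmf.expectation joint (\<lambda>z. ?F (\<epsilon> * queue_len z))
        - \<epsilon> * measure_pmf.expectation joint (\<lambda>z. ?G (\<epsilon> * queue_len z) * net_arrival z)
        - \<epsilon>\<^sup>2 / 2 * measure_pmf.expectation joint (\<lambda>z. ?G' (\<epsilon> * queue_len z) * (net_arrival z)\<^sup>2)"
    using integrable_stein_exp_primitive_next_len integrable_stein_exp_primitive_queue_len
      integrable_stein_exp_mult_net_arrival integrable_stein_exp'_mult_net_arrival_sq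
    unfolding stein_increment_def[abs_def] by (simp add: mult.assoc)
  moreover have "measure_pmf.expectation joint (\<lambda>z. ?F (\<epsilon> * next_len z))
      = measure_pmf.expectation joint (\<lambda>z. ?F (\<epsilon> * queue_len z))"
    using expectation_joint_next_len[of "\<lambda>x. ?F (\<epsilon> * x)"]
      expectation_joint_queue_len[of "\<lambda>x. ?F (\<epsilon> * x)"] by simp
  moreover have "measure_pmf.expectation joint (\<lambda>z. ?G (\<epsilon> * queue_len z) * net_arrival z)
      = measure_pmf.expectation p (\<lambda>q. ?G (\<epsilon> * l1 N q)) * measure_pmf.expectation net_input (\<lambda>d. d)"
    using expectation_joint_mult_net_arrival[of "\<lambda>x. ?G (\<epsilon> * x)" "\<lambda>d. d"]
      integrable_stein_exp_l1 by simp
  moreover have "measure_pmf.expectation joint (\<lambda>z. ?G' (\<epsilon> * queue_len z) * (net_arrival z)\<^sup>2)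
      = measure_pmf.expectation p (\<lambda>q. ?G' (\<epsilon> * l1 N q))
        * measure_pmf.expectation net_input (\<lambda>d. d\<^sup>2)"
    using expectation_joint_mult_net_arrival[of "\<lambda>x. ?G' (\<epsilon> * x)" "\<lambda>d. d\<^sup>2"]
      integrable_stein_exp'_l1 by simp
  ultimately show ?thesis by (simp add: algebra_simps)
qed

lemma stein_identity:
  "measure_pmf.expectation p (\<lambda>q. h (\<epsilon> * l1 N q)) - (\<integral>t. h t \<partial>exp_measure l)
     = measure_pmf.expectation p (\<lambda>q. stein_exp' l h (\<epsilon> * l1 N q)) / l
       - measure_pmf.expectation p (\<lambda>q. stein_exp l h (\<epsilon> * l1 N q))"
proof -
  have "measure_pmf.expectation p (\<lambda>q. h (\<epsilon> * l1 N q))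
      = measure_pmf.expectation p (\<lambda>q. stein_exp' l h (\<epsilon> * l1 N q) / l
          - stein_exp l h (\<epsilon> * l1 N q) + exp_smooth l h 0)"
    using stein_exp_equation[OF l h] by (simp add: algebra_simps)
  also have "\<dots> = measure_pmf.expectation p (\<lambda>q. stein_exp' l h (\<epsilon> * l1 N q)) / l
      - measure_pmf.expectation p (\<lambda>q. stein_exp l h (\<epsilon> * l1 N q)) + exp_smooth l h 0"
    using integrable_stein_exp_l1 integrable_stein_exp'_l1
    by (simp add: measure_pmf.prob_space)
  finally show ?thesis by (simp add: exp_smooth_def)
qed

lemma abs_expectation_stein_increment_le:
  assumes mean: "measure_pmf.expectation net_input (\<lambda>d. d) = - \<epsilon>"
  shows "\<bar>measure_pmf.expectation joint (stein_increment l h \<epsilon>)\<bar>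
    \<le> \<epsilon>\<^sup>2 * measure_pmf.expectation joint (\<lambda>z. next_len z * unused_len z)
       + \<epsilon> ^ 3 * (3 * slot_bound + 2 * l * slot_bound ^ 3)"
proof -
  let ?B = "\<lambda>z. \<epsilon>\<^sup>2 * (next_len z * unused_len z) + 3 * \<epsilon>\<^sup>2 * slot_bound * unused_len z
    + 2 * l * \<epsilon> ^ 3 * slot_bound ^ 3"
  have B: "integrable (measure_pmf joint) ?B"
    using integrable_next_len_mult_unused_len integrable_unused_len by simp
  moreover have "integrable (measure_pmf joint) (stein_increment l h \<epsilon>)"
    using abs_stein_increment_le
    by (intro Bochner_Integration.integrable_bound[OF B] AE_pmfI)
       (auto intro: order_trans[OF _ abs_ge_self])
  ultimately have "\<bar>measure_pmf.expectation joint (stein_increment l h \<epsilon>)\<bar>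
      \<le> measure_pmf.expectation joint ?B"
    using abs_stein_increment_le
    by (intro integral_abs_bound[THEN order_trans] integral_mono_AE AE_pmfI) auto
  also have "\<dots> = \<epsilon>\<^sup>2 * measure_pmf.expectation joint (\<lambda>z. next_len z * unused_len z)
      + 3 * \<epsilon>\<^sup>2 * slot_bound * \<epsilon> + 2 * l * \<epsilon> ^ 3 * slot_bound ^ 3"
    using integrable_next_len_mult_unused_len integrable_unused_len
    by (simp add: expectation_unused_len mean measure_pmf.prob_space)
  finally show ?thesis by (simp add: power2_eq_square power3_eq_cube algebra_simps)
qed

lemma abs_expectation_stein_exp'_le:
  "\<bar>measure_pmf.expectation p (\<lambda>q. stein_exp' l h (\<epsilon> * l1 N q))\<bar> \<le> 1"
proof -
  have "\<bar>measure_pmf.expectation p (\<lambda>q. stein_exp' l h (\<epsilon> * l1 N q))\<bar>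
      \<le> measure_pmf.expectation p (\<lambda>_. 1)"
    using integrable_stein_exp'_l1 stein_exp'_abs_le[OF l h]
    by (intro integral_abs_bound[THEN order_trans] integral_mono) auto
  then show ?thesis by (simp add: measure_pmf.prob_space)
qed

text \<open>Stationarity: the expected increment of \<open>F(\<epsilon> \<Sigma>Q)\<close> vanishes, which leaves only the
  Taylor remainder.\<close>
lemma stein_drift_identity:
  assumes mean: "measure_pmf.expectation net_input (\<lambda>d. d) = - \<epsilon>"
    and second_moment: "measure_pmf.expectation net_input (\<lambda>d. d\<^sup>2) = 2 / l + \<epsilon>\<^sup>2"
  shows "\<epsilon>\<^sup>2 * (measure_pmf.expectation p (\<lambda>q. h (\<epsilon> * l1 N q)) - (\<integral>t. h t \<partial>exp_measure l))
    = - measure_pmf.expectation joint (stein_increment l h \<epsilon>)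
      - \<epsilon> ^ 4 / 2 * measure_pmf.expectation p (\<lambda>q. stein_exp' l h (\<epsilon> * l1 N q))"
  unfolding stein_identity expectation_stein_increment mean second_moment
  using l by (simp add: field_simps power2_eq_square power4_eq_xxxx)

lemma stein_drift_bound:
  assumes mean: "measure_pmf.expectation net_input (\<lambda>d. d) = - \<epsilon>"
    and second_moment: "measure_pmf.expectation net_input (\<lambda>d. d\<^sup>2) = 2 / l + \<epsilon>\<^sup>2"
  shows "\<bar>measure_pmf.expectation p (\<lambda>q. h (\<epsilon> * l1 N q)) - (\<integral>t. h t \<partial>exp_measure l)\<bar>
    \<le> measure_pmf.expectation joint (\<lambda>z. next_len z * unused_len z)
       + (4 * slot_bound + 2 * l * slot_bound ^ 3) * \<epsilon>"
proof -
  define R where "R = measure_pmf.expectation p (\<lambda>q. h (\<epsilon> * l1 N q)) - (\<integral>t. h t \<partial>exp_measure l)"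
  define P where "P = measure_pmf.expectation p (\<lambda>q. stein_exp' l h (\<epsilon> * l1 N q))"
  define M where "M = measure_pmf.expectation joint (stein_increment l h \<epsilon>)"
  define Q where "Q = measure_pmf.expectation joint (\<lambda>z. next_len z * unused_len z)"
  define K where "K = slot_bound"
  have "\<epsilon>\<^sup>2 * \<bar>R\<bar> = \<bar>\<epsilon>\<^sup>2 * R\<bar>" by (simp add: abs_mult)
  also have "\<dots> = \<bar>- M - \<epsilon> ^ 4 / 2 * P\<bar>"
    unfolding R_def M_def P_def stein_drift_identity[OF mean second_moment] ..
  also have "\<dots> \<le> \<bar>M\<bar> + \<epsilon> ^ 4 / 2 * \<bar>P\<bar>"
    using abs_triangle_ineq4[of "- M" "\<epsilon> ^ 4 / 2 * P"] by (simp add: abs_mult)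
  also have "\<dots> \<le> \<epsilon>\<^sup>2 * Q + \<epsilon> ^ 3 * (3 * K + 2 * l * K ^ 3) + \<epsilon> ^ 4 / 2"
    using abs_expectation_stein_increment_le[OF mean] abs_expectation_stein_exp'_le \<epsilon>
    unfolding M_def P_def Q_def K_def by (intro add_mono mult_left_le) auto
  also have "\<dots> = \<epsilon>\<^sup>2 * (Q + \<epsilon> * (3 * K + 2 * l * K ^ 3) + \<epsilon>\<^sup>2 / 2)"
    by (simp add: power2_eq_square power3_eq_cube power4_eq_xxxx algebra_simps)
  finally have "\<bar>R\<bar> \<le> Q + \<epsilon> * (3 * K + 2 * l * K ^ 3) + \<epsilon>\<^sup>2 / 2"
    using \<epsilon> by (simp add: mult_le_cancel_left_pos)
  moreover have "\<epsilon>\<^sup>2 / 2 \<le> \<epsilon> * K"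
    using minus_expectation_net_input_le \<epsilon> unfolding mean K_def
    by (simp add: power2_eq_square)
  ultimately show ?thesis
    unfolding R_def Q_def K_def by (simp add: algebra_simps)
qed

end

lemma wasserstein_le:
  assumes \<epsilon>: "0 < \<epsilon>"
    and mean: "measure_pmf.expectation ar real = measure_pmf.expectation services (l1 N) - \<epsilon>"
    and V: "0 < measure_pmf.variance ar real + measure_pmf.variance services (l1 N)"
  defines "l \<equiv> 2 / (measure_pmf.variance ar real + measure_pmf.variance services (l1 N))"
  shows "wasserstein (measure_pmf (map_pmf (\<lambda>q. \<epsilon> * l1 N q) p))
      (density lborel (exponential_density l))
    \<le> ereal (measure_pmf.expectation joint (\<lambda>z. next_len z * unused_len z)
        + (4 * slot_bound + 2 * l * slot_bound ^ 3) * \<epsilon>)"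
  unfolding wasserstein_def exp_measure_def[symmetric]
proof (rule SUP_least)
  fix h :: "real \<Rightarrow> real" assume "h \<in> {h. lipschitz_on 1 UNIV h}"
  then have h: "lipschitz_on 1 UNIV h" by simp
  have l: "0 < l" using V by (simp add: l_def)
  have "measure_pmf.expectation net_input (\<lambda>d. d) = - \<epsilon>"
    by (simp add: expectation_net_input mean)
  moreover have "measure_pmf.expectation net_input (\<lambda>d. d\<^sup>2) = 2 / l + \<epsilon>\<^sup>2"
    using V by (simp add: expectation_net_input_sq mean l_def)
  ultimately show "ereal \<bar>(\<integral>x. h x \<partial>measure_pmf (map_pmf (\<lambda>q. \<epsilon> * l1 N q) p))
      - (\<integral>x. h x \<partial>exp_measure l)\<bar>
    \<le> ereal (measure_pmf.expectation joint (\<lambda>z. next_len z * unused_len z)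
        + (4 * slot_bound + 2 * l * slot_bound ^ 3) * \<epsilon>)"
    using stein_drift_bound[OF l h \<epsilon>] by simp
qed

lemma wasserstein_le_max:
  fixes c0 C \<gamma> :: real
  assumes \<epsilon>: "0 < \<epsilon>"
    and mean: "measure_pmf.expectation ar real = measure_pmf.expectation services (l1 N) - \<epsilon>"
    and var: "c0 \<le> measure_pmf.variance ar real + measure_pmf.variance services (l1 N)"
    and c0: "0 < c0"
    and unused: "measure_pmf.expectation joint (\<lambda>z. next_len z * unused_len z) \<le> C * \<gamma>"
    and \<gamma>: "0 \<le> \<gamma>"
  shows "wasserstein (measure_pmf (map_pmf (\<lambda>q. \<epsilon> * l1 N q) p))
      (density lborel (exponential_density
        (2 / (measure_pmf.variance ar real + measure_pmf.variance services (l1 N)))))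
    \<le> ereal ((max C 0 + 4 * slot_bound + 2 * (2 / c0) * slot_bound ^ 3) * max \<gamma> \<epsilon>)"
proof -
  define V where "V = measure_pmf.variance ar real + measure_pmf.variance services (l1 N)"
  have V: "c0 \<le> V" "0 < V" using var c0 by (simp_all add: V_def)
  have "C * \<gamma> \<le> max C 0 * max \<gamma> \<epsilon>"
    using \<gamma> \<epsilon> by (intro mult_mono) auto
  moreover have "(4 * slot_bound + 2 * (2 / V) * slot_bound ^ 3) * \<epsilon>
      \<le> (4 * slot_bound + 2 * (2 / c0) * slot_bound ^ 3) * max \<gamma> \<epsilon>"
    using V c0 \<epsilon> slot_bound_nonneg
    by (intro mult_mono add_left_mono mult_right_mono frac_le) auto
  ultimately show ?thesis
    using wasserstein_le[OF \<epsilon> mean V(2)[unfolded V_def]] unused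
    by (simp add: V_def[symmetric] algebra_simps order_trans)
qed

end

theorem theorem3:
  fixes N :: nat
    and serv :: "nat \<Rightarrow> nat pmf"
    and arr :: "real \<Rightarrow> nat pmf"
    and policy :: "qvec \<Rightarrow> nat \<Rightarrow> qvec pmf"
    and \<pi> :: "real \<Rightarrow> qvec pmf"
    and A_max S_max :: nat
    and c0 \<epsilon>0 C :: real
    and g :: "real \<Rightarrow> real"
  defines "\<mu>\<Sigma> \<equiv> (\<Sum>n<N. measure_pmf.expectation (serv n) real)"
      and "\<nu>2 \<equiv> measure_pmf.variance (Pi_pmf {..<N} 0 serv) (\<lambda>s. real (\<Sum>n<N. s n))"
  assumes N_pos: "N \<ge> 1"
    and serv_bdd: "\<And>n. n < N \<Longrightarrow> set_pmf (serv n) \<subseteq> {..S_max}"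
    and arr_bdd: "\<And>\<epsilon>. 0 < \<epsilon> \<Longrightarrow> \<epsilon> < \<mu>\<Sigma> \<Longrightarrow> set_pmf (arr \<epsilon>) \<subseteq> {..A_max}"
    and arr_zero: "\<And>\<epsilon>. 0 < \<epsilon> \<Longrightarrow> \<epsilon> < \<mu>\<Sigma> \<Longrightarrow> pmf (arr \<epsilon>) 0 > 0"
    and arr_mean: "\<And>\<epsilon>. 0 < \<epsilon> \<Longrightarrow> \<epsilon> < \<mu>\<Sigma> \<Longrightarrow>
                     measure_pmf.expectation (arr \<epsilon>) real = \<mu>\<Sigma> - \<epsilon>"
    and c0_pos: "c0 > 0"
    and var_lb: "\<And>\<epsilon>. 0 < \<epsilon> \<Longrightarrow> \<epsilon> < \<mu>\<Sigma> \<Longrightarrow>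
                   measure_pmf.variance (arr \<epsilon>) real + \<nu>2 \<ge> c0"
    and policy_ok: "\<And>q a x. x \<in> set_pmf (policy q a) \<Longrightarrow> (\<Sum>n<N. x n) = a"
    and thr_stat: "\<And>\<epsilon>. 0 < \<epsilon> \<Longrightarrow> \<epsilon> < \<mu>\<Sigma> \<Longrightarrow> stationary N (arr \<epsilon>) policy serv (\<pi> \<epsilon>)"
    and thr_mom: "\<And>\<epsilon> k. 0 < \<epsilon> \<Longrightarrow> \<epsilon> < \<mu>\<Sigma> \<Longrightarrow>
                   integrable (measure_pmf (\<pi> \<epsilon>)) (\<lambda>q. l1 N q ^ k)"
    and eps0_pos: "\<epsilon>0 > 0"
    and g_nonneg: "\<And>\<epsilon>. 0 < \<epsilon> \<Longrightarrow> \<epsilon> < \<epsilon>0 \<Longrightarrow> g \<epsilon> \<ge> 0"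
    and hyp: "\<And>\<epsilon>. 0 < \<epsilon> \<Longrightarrow> \<epsilon> < \<epsilon>0 \<Longrightarrow> \<epsilon> < \<mu>\<Sigma> \<Longrightarrow>
               measure_pmf.expectation (steady_joint N (arr \<epsilon>) policy serv (\<pi> \<epsilon>))
                 (\<lambda>(q, x, s). l1 N (next_queue N q x s) * l1 N (unused N q x s))
               \<le> C * g \<epsilon>"
  shows "\<exists>C'. \<forall>\<epsilon>. 0 < \<epsilon> \<and> \<epsilon> < \<epsilon>0 \<and> \<epsilon> < \<mu>\<Sigma> \<longrightarrow>
           wasserstein
             (measure_pmf (map_pmf (\<lambda>q. \<epsilon> * l1 N q) (\<pi> \<epsilon>)))
             (density lborel (exponential_density
                (2 / (measure_pmf.variance (arr \<epsilon>) real + \<nu>2))))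
           \<le> ereal (C' * max (g \<epsilon>) \<epsilon>)"
proof -
  define C' where "C' = max C 0 + 4 * (real A_max + 2 * (real N * real S_max))
    + 2 * (2 / c0) * (real A_max + 2 * (real N * real S_max)) ^ 3"
  have "wasserstein (measure_pmf (map_pmf (\<lambda>q. \<epsilon> * l1 N q) (\<pi> \<epsilon>)))
      (density lborel (exponential_density (2 / (measure_pmf.variance (arr \<epsilon>) real + \<nu>2))))
    \<le> ereal (C' * max (g \<epsilon>) \<epsilon>)" if \<epsilon>: "0 < \<epsilon>" "\<epsilon> < \<epsilon>0" "\<epsilon> < \<mu>\<Sigma>" for \<epsilon>
  proof -
    interpret lb_stationary N "arr \<epsilon>" policy serv "\<pi> \<epsilon>" A_max S_max
      using serv_bdd arr_bdd[OF \<epsilon>(1,3)] policy_ok thr_stat[OF \<epsilon>(1,3)] thr_mom[OF \<epsilon>(1,3)]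
      by unfold_locales auto
    have \<nu>2: "\<nu>2 = measure_pmf.variance services (l1 N)"
      by (simp add: \<nu>2_def l1_def[abs_def])
    show ?thesis
      unfolding \<nu>2 C'_def slot_bound_def[symmetric]
      using var_lb[OF \<epsilon>(1,3)] hyp[OF \<epsilon>] g_nonneg[OF \<epsilon>(1,2)]
      by (intro wasserstein_le_max \<epsilon>(1) c0_pos)
         (simp_all add: arr_mean[OF \<epsilon>(1,3)] \<mu>\<Sigma>_def expectation_l1_services \<nu>2
           next_len_def unused_len_def case_prod_unfold)
  qed
  then show ?thesis by blast
qed

end
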